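(* $\mathsf{AP}(R_5,R_5)=\operatorname{Pol}(R_5,R'_5)=\mathsf{L}$.
   Context: Tuples in $\{0,1\}^4$ are written as strings $abcd$. The relations $R_1,\dots,R_5\subseteq\{0,1\}^4$ are $R_1=\{0000,1000,0100,1100,1010,0110,1001,0101,0011,1011,0111,1111\}$, $R_2=\{0000,1000,0100,1100,1010,0101,0011,1111\}$, $R_3=\{0000,1100,1010,0101,0011,1011,0111,1111\}$, $R_4=\{0000,1100,1010,0101,0011,1111\}$, $R_5=\{0000,1100,1010,0110,1001,0101,0011,1111\}$. For $R,S\subseteq\{0,1\}^4$, a Boolean function $f\colon\{0,1\}^n\to\{0,1\}$ is analogy-preserving relative to $(R,S)$ if for all $\mathbf{a},\mathbf{b},\mathbf{c},\mathbf{d}\in\{0,1\}^n$ with $(a_i,b_i,c_i,d_i)\in R$ for every $i$ and such that $(f(\mathbf{a}),f(\mathbf{b}),f(\mathbf{c}),x)\in S$ for some $x\in\{0,1\}$, we have $(f(\mathbf{a}),f(\mathbf{b}),f(\mathbf{c}),f(\mathbf{d}))\in S$; $\mathsf{AP}(R,S)$ is the set of all such functions of all arities. $S':=S\cup\{(a,b,c,d)\mid\nexists x\colon(a,b,c,x)\in S\}$, and $\operatorname{Pol}(R,S)$ is the set of Boolean functions $f$ with $f(\mathbf{a}_1,\dots,\mathbf{a}_n)\in S$ (componentwise) for all $\mathbf{a}_1,\dots,\mathbf{a}_n\in R$. $\mathsf{L}$ is the set of affine Boolean functions $f(x_1,\dots,x_n)=c+a_1x_1+\dots+a_nx_n\pmod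 2$ with $c,a_i\in\{0,1\}$. *)

theory Defs
  imports Main
begin

text \<open>Boolean values: 0 = False, 1 = True. A 4-tuple abcd is (a,b,c,d).
 A Boolean function of arity n is a function f on bool lists, only evaluated
 on lists of length n.\<close>

type_synonym tup4 = "bool \<times> bool \<times> bool \<times> bool"

definition R5 :: "tup4 set" where
  "R5 = {(False,False,False,False), (True,True,False,False), (True,False,True,False),
         (False,True,True,False), (True,False,False,True), (False,True,False,True),
         (False,False,True,True), (True,True,True,True)}"

definition AP :: "tup4 set \<Rightarrow> tup4 set \<Rightarrow> nat \<Rightarrow> (bool list \<Rightarrow> bool) \<Rightarrow> bool" where
  "AP R S n f \<longleftrightarrow>
     (\<forall>a b c d. length a = n \<longrightarrow> length b = n \<longrightarrow> length c = n \<longrightarrow> length d = n \<longrightarrow>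
        (\<forall>i<n. (a!i, b!i, c!i, d!i) \<in> R) \<longrightarrow>
        (\<exists>x. (f a, f b, f c, x) \<in> S) \<longrightarrow>
        (f a, f b, f c, f d) \<in> S)"

definition completion :: "tup4 set \<Rightarrow> tup4 set" where
  "completion S = S \<union> {(a,b,c,d). \<not> (\<exists>x. (a,b,c,x) \<in> S)}"

definition Pol :: "tup4 set \<Rightarrow> tup4 set \<Rightarrow> nat \<Rightarrow> (bool list \<Rightarrow> bool) \<Rightarrow> bool" where
  "Pol R S n f \<longleftrightarrow>
     (\<forall>ts. length ts = n \<longrightarrow> set ts \<subseteq> R \<longrightarrow>
        (f (map (\<lambda>(a,b,c,d). a) ts), f (map (\<lambda>(a,b,c,d). b) ts),
         f (map (\<lambda>(a,b,c,d). c) ts), f (map (\<lambda>(a,b,c,d). d) ts)) \<in> S)"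

definition xsum :: "bool list \<Rightarrow> bool" where
  "xsum xs = foldr (\<noteq>) xs False"

definition affine :: "nat \<Rightarrow> (bool list \<Rightarrow> bool) \<Rightarrow> bool" where
  "affine n f \<longleftrightarrow> (\<exists>c as. length as = n \<and>
      (\<forall>x. length x = n \<longrightarrow> f x = (c \<noteq> xsum (map2 (\<and>) as x))))"

end

theory Submission
  imports Defs
begin

text \<open>R5 is the graph of the Boolean minority operation x + y + z (mod 2). Every triple extends
to a row of R5, so R5 is its own completion, and for the graph of any ternary operation both AP and
Pol reduce to f commuting with that operation applied coordinatewise. Affine maps commute with
minority because minority is itself affine. Conversely, if f commutes with minority then f(0,x) is
affine by induction on the arity, and the instance f(1,x) = f(1,0) + f(0,0) + f(0,x) of commutation
shows that the first variable enters linearly.\<close>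

definition graph3 :: "(bool \<Rightarrow> bool \<Rightarrow> bool \<Rightarrow> bool) \<Rightarrow> tup4 set" where
  "graph3 g = {(a, b, c, d). d = g a b c}"

definition map3 :: "(bool \<Rightarrow> bool \<Rightarrow> bool \<Rightarrow> bool) \<Rightarrow> bool list \<Rightarrow> bool list \<Rightarrow> bool list \<Rightarrow> bool list" where
  "map3 g a b c = map (\<lambda>(x, y, z). g x y z) (zip a (zip b c))"

definition commutes3 :: "(bool \<Rightarrow> bool \<Rightarrow> bool \<Rightarrow> bool) \<Rightarrow> nat \<Rightarrow> (bool list \<Rightarrow> bool) \<Rightarrow> bool" where
  "commutes3 g n f \<longleftrightarrow> (\<forall>a b c. length a = n \<longrightarrow> length b = n \<longrightarrow> length c = n \<longrightarrow>
      f (map3 g a b c) = g (f a) (f b) (f c))"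

definition xor3 :: "bool \<Rightarrow> bool \<Rightarrow> bool \<Rightarrow> bool" where
  "xor3 x y z = (x \<noteq> (y \<noteq> z))"

lemma length_map3 [simp]: "length (map3 g a b c) = min (length a) (min (length b) (length c))"
  by (simp add: map3_def)

lemma nth_map3 [simp]:
  "i < length a \<Longrightarrow> i < length b \<Longrightarrow> i < length c \<Longrightarrow> map3 g a b c ! i = g (a ! i) (b ! i) (c ! i)"
  by (simp add: map3_def)

lemma map3_Cons [simp]: "map3 g (x # a) (y # b) (z # c) = g x y z # map3 g a b c"
  by (simp add: map3_def)

lemma mem_graph3_iff [simp]: "(a, b, c, d) \<in> graph3 g \<longleftrightarrow> d = g a b c"
  by (simp add: graph3_def)

lemma R5_eq_graph3_xor3: "R5 = graph3 xor3"
proof (rule set_eqI)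
  fix t :: tup4
  obtain a b c d where "t = (a, b, c, d)" by (cases t)
  then show "t \<in> R5 \<longleftrightarrow> t \<in> graph3 xor3"
    unfolding R5_def xor3_def by (cases a; cases b; cases c; cases d) simp_all
qed

lemma completion_graph3: "completion (graph3 g) = graph3 g"
  unfolding completion_def by auto

lemma AP_graph3_iff: "AP (graph3 g) (graph3 g) n f \<longleftrightarrow> commutes3 g n f"
proof
  assume AP: "AP (graph3 g) (graph3 g) n f"
  show "commutes3 g n f" unfolding commutes3_def
  proof (intro allI impI)
    fix a b c :: "bool list"
    assume len: "length a = n" "length b = n" "length c = n"
    have "(f a, f b, f c, f (map3 g a b c)) \<in> graph3 g"
      by (rule AP[unfolded AP_def, rule_format]) (use len in auto)
    then show "f (map3 g a b c) = g (f a) (f b) (f c)"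
      by simp
  qed
next
  assume com: "commutes3 g n f"
  show "AP (graph3 g) (graph3 g) n f" unfolding AP_def
  proof (intro allI impI)
    fix a b c d :: "bool list"
    assume len: "length a = n" "length b = n" "length c = n" "length d = n"
      and rows: "\<forall>i<n. (a ! i, b ! i, c ! i, d ! i) \<in> graph3 g"
    have "d = map3 g a b c"
      by (rule nth_equalityI) (use len rows in auto)
    then show "(f a, f b, f c, f d) \<in> graph3 g"
      using com len unfolding commutes3_def by simp
  qed
qed

lemma Pol_graph3_iff: "Pol (graph3 g) (graph3 g) n f \<longleftrightarrow> commutes3 g n f"
proof
  assume pol: "Pol (graph3 g) (graph3 g) n f"
  show "commutes3 g n f" unfolding commutes3_def
  proof (intro allI impI)
    fix a b c :: "bool list"
    assume len: "length a = n" "length b = n" "length c = n"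
    define ts where "ts = map (\<lambda>i. (a ! i, b ! i, c ! i, g (a ! i) (b ! i) (c ! i))) [0..<n]"
    have "length ts = n" "set ts \<subseteq> graph3 g"
      unfolding ts_def by auto
    then have "(f (map (\<lambda>(a, b, c, d). a) ts), f (map (\<lambda>(a, b, c, d). b) ts),
        f (map (\<lambda>(a, b, c, d). c) ts), f (map (\<lambda>(a, b, c, d). d) ts)) \<in> graph3 g"
      by (rule pol[unfolded Pol_def, rule_format])
    moreover have "map (\<lambda>(a, b, c, d). a) ts = a" "map (\<lambda>(a, b, c, d). b) ts = b"
      "map (\<lambda>(a, b, c, d). c) ts = c" "map (\<lambda>(a, b, c, d). d) ts = map3 g a b c"
      unfolding ts_def by (auto intro!: nth_equalityI simp: len)
    ultimately show "f (map3 g a b c) = g (f a) (f b) (f c)"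
      by (simp only: mem_graph3_iff)
  qed
next
  assume com: "commutes3 g n f"
  show "Pol (graph3 g) (graph3 g) n f" unfolding Pol_def
  proof (intro allI impI)
    fix ts :: "tup4 list"
    assume len: "length ts = n" and rows: "set ts \<subseteq> graph3 g"
    let ?a = "map (\<lambda>(a, b, c, d). a) ts" and ?b = "map (\<lambda>(a, b, c, d). b) ts"
    let ?c = "map (\<lambda>(a, b, c, d). c) ts" and ?d = "map (\<lambda>(a, b, c, d). d) ts"
    have "?d = map3 g ?a ?b ?c"
    proof (rule nth_equalityI)
      fix i assume i: "i < length ?d"
      then have "ts ! i \<in> set ts" by simp
      with rows have "ts ! i \<in> graph3 g" by blast
      then show "?d ! i = map3 g ?a ?b ?c ! i"
        using i by (cases "ts ! i") auto
    qed simp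
    then show "(f ?a, f ?b, f ?c, f ?d) \<in> graph3 g"
      using com len unfolding commutes3_def by simp
  qed
qed

lemma xsum_Nil [simp]: "xsum [] = False"
  by (simp add: xsum_def)

lemma xsum_Cons [simp]: "xsum (x # xs) = (x \<noteq> xsum xs)"
  by (simp add: xsum_def)

lemma xsum_map2_and_map3_xor3:
  assumes "length a = length as" "length b = length as" "length c = length as"
  shows "xsum (map2 (\<and>) as (map3 xor3 a b c))
    = xor3 (xsum (map2 (\<and>) as a)) (xsum (map2 (\<and>) as b)) (xsum (map2 (\<and>) as c))"
  using assms
proof (induction as arbitrary: a b c)
  case (Cons k as)
  then obtain x a' y b' z c' where "a = x # a'" "b = y # b'" "c = z # c'"
    by (metis length_Suc_conv)
  with Cons show ?case by (auto simp: xor3_def)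
qed (simp add: xor3_def)

lemma affine_imp_commutes3_xor3:
  assumes "affine n f"
  shows "commutes3 xor3 n f"
proof -
  obtain c as where len: "length as = n"
    and f: "\<And>x. length x = n \<Longrightarrow> f x = (c \<noteq> xsum (map2 (\<and>) as x))"
    using assms unfolding affine_def by blast
  show ?thesis unfolding commutes3_def
  proof (intro allI impI)
    fix x y z :: "bool list"
    assume "length x = n" "length y = n" "length z = n"
    then show "f (map3 xor3 x y z) = xor3 (f x) (f y) (f z)"
      using len by (simp add: f xsum_map2_and_map3_xor3) (auto simp: xor3_def)
  qed
qed

lemma commutes3_xor3_Cons:
  assumes "commutes3 xor3 (Suc n) f"
  shows "commutes3 xor3 n (\<lambda>xs. f (v # xs))"
  unfolding commutes3_def
proof (intro allI impI)
  fix a b c :: "bool list"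
  assume "length a = n" "length b = n" "length c = n"
  then have "f (map3 xor3 (v # a) (v # b) (v # c)) = xor3 (f (v # a)) (f (v # b)) (f (v # c))"
    using assms unfolding commutes3_def by (simp del: map3_Cons)
  moreover have "xor3 v v v = v"
    by (simp add: xor3_def)
  ultimately show "f (v # map3 xor3 a b c) = xor3 (f (v # a)) (f (v # b)) (f (v # c))"
    by simp
qed

lemma commutes3_xor3_True_Cons:
  assumes "commutes3 xor3 (Suc n) f" and "length xs = n"
  shows "f (True # xs) = xor3 (f (True # replicate n False)) (f (False # replicate n False)) (f (False # xs))"
proof -
  have "map3 xor3 (True # replicate n False) (False # replicate n False) (False # xs) = True # xs"
    using assms(2) by (auto intro!: nth_equalityI simp: xor3_def)
  moreover have "f (map3 xor3 (True # replicate n False) (False # replicate n False) (False # xs))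
      = xor3 (f (True # replicate n False)) (f (False # replicate n False)) (f (False # xs))"
    using assms unfolding commutes3_def by (simp del: map3_Cons)
  ultimately show ?thesis
    by simp
qed

lemma commutes3_xor3_imp_affine: "commutes3 xor3 n f \<Longrightarrow> affine n f"
proof (induction n arbitrary: f)
  case 0
  then show ?case
    unfolding affine_def by (intro exI[of _ "f []"] exI[of _ "[]"]) auto
next
  case (Suc n)
  let ?z = "replicate n False"
  obtain c as where len: "length as = n"
    and f0: "\<And>x. length x = n \<Longrightarrow> f (False # x) = (c \<noteq> xsum (map2 (\<and>) as x))"
    using Suc.IH[OF commutes3_xor3_Cons[OF Suc.prems]] unfolding affine_def by blast
  define k where "k = (f (True # ?z) \<noteq> f (False # ?z))"
  have f1: "f (True # x) = (k \<noteq> f (False # x))" if "length x = n" for x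
    using commutes3_xor3_True_Cons[OF Suc.prems that] unfolding k_def xor3_def by argo
  have "f x = (c \<noteq> xsum (map2 (\<and>) (k # as) x))" if "length x = Suc n" for x
  proof -
    obtain v x' where x: "x = v # x'" "length x' = n"
      using \<open>length x = Suc n\<close> by (cases x) auto
    show ?thesis
      using f0[OF x(2)] f1[OF x(2)] unfolding x(1) by (cases v) auto
  qed
  with len show ?case
    unfolding affine_def by (intro exI[of _ c] exI[of _ "k # as"]) auto
qed

lemma commutes3_xor3_iff_affine: "commutes3 xor3 n f \<longleftrightarrow> affine n f"
  using commutes3_xor3_imp_affine affine_imp_commutes3_xor3 by blast

theorem mainTheorem10:
  shows "\<forall>n f. (AP R5 R5 n f \<longleftrightarrow> affine n f) \<and> (Pol R5 (completion R5) n f \<longleftrightarrow> affine n f)"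
  unfolding R5_eq_graph3_xor3 completion_graph3 AP_graph3_iff Pol_graph3_iff
  by (simp add: commutes3_xor3_iff_affine)

end
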